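(* Let $\mathcal M\subseteq\bigcup_{K\ge1}\mathcal F_K\times\mathcal Q_K$ satisfy: (1) $K(F)<M$ for all $(F,Q)\in\mathcal M$; (2) for every $(F,Q)\in\mathcal M$, $\mathcal F_{K(F)}^{\mathrm{an}}\times\{Q\}\subseteq\mathcal M$. Then $\mathcal M$ is identifiable if and only if (a) for all $(F^1,Q^1),(F^2,Q^2)\in\mathcal M$ with $F^1Q^1=F^2Q^2$ we have $\mathrm{cone}(Q^1)=\mathrm{cone}(Q^2)$, and (b) for every $(F,Q)\in\mathcal M$ the rows of $Q$ are linearly independent.
   Context: Fix positive integers $M$ and $N$. For a positive integer $K$, $\mathcal F_K$ is the set of real $M\times K$ matrices with all entries in $[0,1]$, and $\mathcal Q_K$ is the set of real $K\times N$ matrices with entries in $[0,1]$ each of whose columns sums to $1$. $K(F)$ is the number of columns of $F$. $\mathcal F_K^{\mathrm{an}}$ is the set of $F\in\mathcal F_K$ such that for every $k\in\{1,\dots,K\}$ there is a row $s$ with $F_{sk}>0$ and $F_{s\ell}=0$ for all $\ell\ne k$. For a matrix $A$ with nonnegative entries, $\mathrm{cone}(A)$ is the set of all linear combinations with nonnegative coefficients of the rows of $A$. $(F^1,Q^1)\sim(F^2,Q^2)$ means $F^1,F^2$ have the same number $K$ of columns and there is a permutation $\pi$ of $\{1,\dots,K\}$ with $F^2_{sk}=F^1_{s\pi(k)}$ and $Q^2_{ki}=Q^1_{\pi(k)i}$ for all $s,k,i$. $\mathcal M$ is identifiable if for all $(F^1,Q^1),(F^2,Q^2)\in\mathcal M$,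 $F^1Q^1=F^2Q^2$ implies $(F^1,Q^1)\sim(F^2,Q^2)$. *)

theory Defs
  imports "Jordan_Normal_Form.Matrix"
begin

(* Matrices are JNF matrices; indices are 0-based (row s < M, column k < K). *)

definition Fset :: "nat \<Rightarrow> nat \<Rightarrow> real mat set" where
  "Fset M K = {F \<in> carrier_mat M K.
     \<forall>s<M. \<forall>k<K. 0 \<le> F $$ (s,k) \<and> F $$ (s,k) \<le> 1}"

definition Qset :: "nat \<Rightarrow> nat \<Rightarrow> real mat set" where
  "Qset K N = {Q \<in> carrier_mat K N.
     (\<forall>k<K. \<forall>i<N. 0 \<le> Q $$ (k,i) \<and> Q $$ (k,i) \<le> 1) \<and>
     (\<forall>i<N. (\<Sum>k<K. Q $$ (k,i)) = 1)}"

definition Fan :: "nat \<Rightarrow> nat \<Rightarrow> real mat set" where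
  "Fan M K = {F \<in> Fset M K.
     \<forall>k<K. \<exists>s<M. F $$ (s,k) > 0 \<and> (\<forall>l<K. l \<noteq> k \<longrightarrow> F $$ (s,l) = 0)}"

definition cone_rows :: "real mat \<Rightarrow> real vec set" where
  "cone_rows A = {v. \<exists>c::nat \<Rightarrow> real. (\<forall>i<dim_row A. 0 \<le> c i) \<and>
      v = vec (dim_col A) (\<lambda>j. \<Sum>i<dim_row A. c i * A $$ (i,j))}"

definition rows_lin_indep :: "real mat \<Rightarrow> bool" where
  "rows_lin_indep Q \<longleftrightarrow> (\<forall>c::nat \<Rightarrow> real.
     (\<forall>j<dim_col Q. (\<Sum>k<dim_row Q. c k * Q $$ (k,j)) = 0) \<longrightarrow> (\<forall>k<dim_row Q. c k = 0))"

definition perm_equiv :: "real mat \<times> real mat \<Rightarrow> real mat \<times> real mat \<Rightarrow> bool" where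
  "perm_equiv p1 p2 \<longleftrightarrow> (case p1 of (F1,Q1) \<Rightarrow> case p2 of (F2,Q2) \<Rightarrow>
     dim_col F1 = dim_col F2 \<and>
     (\<exists>\<pi>. \<pi> permutes {..<dim_col F1} \<and>
        (\<forall>s<dim_row F1. \<forall>k<dim_col F1. F2 $$ (s,k) = F1 $$ (s, \<pi> k)) \<and>
        (\<forall>k<dim_col F1. \<forall>i<dim_col Q1. Q2 $$ (k,i) = Q1 $$ (\<pi> k, i))))"

definition identifiable :: "(real mat \<times> real mat) set \<Rightarrow> bool" where
  "identifiable \<M> \<longleftrightarrow> (\<forall>F1 Q1 F2 Q2. (F1,Q1) \<in> \<M> \<longrightarrow> (F2,Q2) \<in> \<M> \<longrightarrow>
      F1 * Q1 = F2 * Q2 \<longrightarrow> perm_equiv (F1,Q1) (F2,Q2))"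

end

theory Submission
  imports Defs
begin

(* If (F1,Q1) ~ (F2,Q2) then Q2 is a row permutation of Q1, so identifiability gives equal
   cones. It also forces independent rows of Q: since K < M, the matrices whose first K rows
   are the unit rows and whose remaining rows are constant 1/2, respectively 1/2 + c, both lie
   in F^an, and if c is a linear dependence of the rows of Q they give the same product with Q
   without being column permutations of each other.

   Conversely, equal cones give Q2 = A Q1 and Q1 = B Q2 with A, B nonnegative. Independence of
   the rows makes A and B mutually inverse, and a nonnegative matrix with nonnegative inverse
   has exactly one nonzero entry in each row and column. As the columns of Q1 and Q2 sum to 1,
   A is then a permutation matrix, and independence of the rows of Q2 recovers F2 from
   F1 Q1 = F2 Q2. *)

definition nonneg_mat :: "real mat \<Rightarrow> bool" where
  "nonneg_mat A \<longleftrightarrow> (\<forall>i<dim_row A. \<forall>j<dim_col A. 0 \<le> A $$ (i,j))"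

definition perm_mat :: "nat \<Rightarrow> (nat \<Rightarrow> nat) \<Rightarrow> real mat" where
  "perm_mat n \<pi> = mat n n (\<lambda>(i,j). of_bool (j = \<pi> i))"

definition permute_cols :: "real mat \<Rightarrow> (nat \<Rightarrow> nat) \<Rightarrow> real mat" where
  "permute_cols F \<pi> = mat (dim_row F) (dim_col F) (\<lambda>(s,k). F $$ (s, \<pi> k))"

lemma index_mult_mat_sum:
  assumes "A \<in> carrier_mat m n" "B \<in> carrier_mat n p" "i < m" "k < p"
  shows "(A * B) $$ (i,k) = (\<Sum>j<n. A $$ (i,j) * B $$ (j,k))"
  using assms by (simp add: scalar_prod_def atLeast0LessThan)

lemma perm_mat_mult:
  assumes "\<pi> permutes {..<n}" "Q \<in> carrier_mat n m"
  shows "perm_mat n \<pi> * Q = mat n m (\<lambda>(i,k). Q $$ (\<pi> i, k))" (is "_ = ?P")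
proof (rule eq_matI)
  fix i k assume "i < dim_row ?P" "k < dim_col ?P"
  then have i: "i < n" and k: "k < m" by auto
  have "\<pi> i < n" using permutes_in_image[OF assms(1), of i] i by simp
  have "(perm_mat n \<pi> * Q) $$ (i,k) = (\<Sum>j<n. perm_mat n \<pi> $$ (i,j) * Q $$ (j,k))"
    using i k assms(2) by (intro index_mult_mat_sum) (auto simp: perm_mat_def)
  also have "\<dots> = Q $$ (\<pi> i, k)"
    using i \<open>\<pi> i < n\<close> by (simp add: perm_mat_def)
  finally show "(perm_mat n \<pi> * Q) $$ (i,k) = ?P $$ (i,k)"
    using i k by simp
qed (use assms in \<open>auto simp: perm_mat_def\<close>)

lemma permute_cols_mult_perm_mat:
  assumes "\<pi> permutes {..<n}" "F \<in> carrier_mat m n"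
  shows "permute_cols F \<pi> * perm_mat n \<pi> = F"
proof (rule eq_matI)
  fix s j assume "s < dim_row F" "j < dim_col F"
  then have s: "s < m" and j: "j < n" using assms(2) by auto
  have "(permute_cols F \<pi> * perm_mat n \<pi>) $$ (s,j) =
      (\<Sum>k<n. permute_cols F \<pi> $$ (s,k) * perm_mat n \<pi> $$ (k,j))"
    using s j assms(2) by (intro index_mult_mat_sum) (auto simp: permute_cols_def perm_mat_def)
  also have "\<dots> = (\<Sum>k<n. F $$ (s, \<pi> k) * of_bool (j = \<pi> k))"
    using s j assms(2) by (intro sum.cong) (auto simp: permute_cols_def perm_mat_def)
  also have "\<dots> = (\<Sum>k<n. F $$ (s, k) * of_bool (j = k))"
    using sum.reindex_bij_betw[OF permutes_imp_bij[OF assms(1)], of "\<lambda>k. F $$ (s,k) * of_bool (j = k)"]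
    by simp
  also have "\<dots> = F $$ (s,j)" using j by simp
  finally show "(permute_cols F \<pi> * perm_mat n \<pi>) $$ (s,j) = F $$ (s,j)" .
qed (use assms in \<open>auto simp: permute_cols_def perm_mat_def\<close>)

lemma perm_equiv_iff:
  assumes "F1 \<in> carrier_mat M K1" "Q1 \<in> carrier_mat K1 N"
    and "F2 \<in> carrier_mat M K2" "Q2 \<in> carrier_mat K2 N"
  shows "perm_equiv (F1,Q1) (F2,Q2) \<longleftrightarrow> K1 = K2 \<and>
    (\<exists>\<pi>. \<pi> permutes {..<K1} \<and> F2 = permute_cols F1 \<pi> \<and> Q2 = perm_mat K1 \<pi> * Q1)"
proof -
  have F: "F2 = permute_cols F1 \<pi> \<longleftrightarrow> (\<forall>s<M. \<forall>k<K1. F2 $$ (s,k) = F1 $$ (s, \<pi> k))"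
    if "K1 = K2" for \<pi>
    using assms that by (auto simp: mat_eq_iff permute_cols_def)
  have Q: "Q2 = perm_mat K1 \<pi> * Q1 \<longleftrightarrow> (\<forall>k<K1. \<forall>i<N. Q2 $$ (k,i) = Q1 $$ (\<pi> k, i))"
    if "K1 = K2" "\<pi> permutes {..<K1}" for \<pi>
  proof -
    have "perm_mat K1 \<pi> * Q1 = mat K1 N (\<lambda>(k,i). Q1 $$ (\<pi> k, i))"
      using perm_mat_mult that(2) assms(2) .
    then show ?thesis using assms(4) that(1) by (auto simp: mat_eq_iff)
  qed
  have "perm_equiv (F1,Q1) (F2,Q2) \<longleftrightarrow> K1 = K2 \<and> (\<exists>\<pi>. \<pi> permutes {..<K1} \<and>
      (\<forall>s<M. \<forall>k<K1. F2 $$ (s,k) = F1 $$ (s, \<pi> k)) \<and>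
      (\<forall>k<K1. \<forall>i<N. Q2 $$ (k,i) = Q1 $$ (\<pi> k, i)))"
    using assms unfolding perm_equiv_def by auto
  then show ?thesis using F Q by blast
qed

lemma rows_lin_indep_mult_cancel:
  assumes "rows_lin_indep Q" "X \<in> carrier_mat m (dim_row Q)" "Y \<in> carrier_mat m (dim_row Q)"
    and "X * Q = Y * Q"
  shows "X = Y"
proof (rule eq_matI)
  fix s k assume s: "s < dim_row Y" and k: "k < dim_col Y"
  define c where "c l = X $$ (s,l) - Y $$ (s,l)" for l
  have "(\<Sum>l<dim_row Q. c l * Q $$ (l,j)) = 0" if j: "j < dim_col Q" for j
  proof -
    have "(X * Q) $$ (s,j) = (Y * Q) $$ (s,j)" using assms(4) by simp
    then show ?thesis
      using assms(2,3) s j by (simp add: index_mult_mat_sum[of _ m "dim_row Q" _ "dim_col Q"]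
          c_def left_diff_distrib sum_subtractf del: index_mult_mat)
  qed
  then have "c k = 0"
    using assms(1,3) k unfolding rows_lin_indep_def by auto
  then show "X $$ (s,k) = Y $$ (s,k)" by (simp add: c_def)
qed (use assms in auto)

lemma mutual_factors_mult_eq_one:
  assumes "rows_lin_indep Q2" "A \<in> carrier_mat m n" "B \<in> carrier_mat n m" "Q2 \<in> carrier_mat m N"
    and "Q2 = A * Q1" "Q1 = B * Q2"
  shows "A * B = 1\<^sub>m m"
proof (rule rows_lin_indep_mult_cancel[OF assms(1)])
  have "(A * B) * Q2 = A * (B * Q2)" using assms(2-4) by (rule assoc_mult_mat)
  also have "\<dots> = 1\<^sub>m m * Q2" using assms(4) by (simp add: assms(5,6)[symmetric])
  finally show "(A * B) * Q2 = 1\<^sub>m m * Q2" .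
qed (use assms(2-4) in auto)

lemma row_in_cone_rows:
  assumes "k < dim_row Q"
  shows "row Q k \<in> cone_rows Q"
  unfolding cone_rows_def
  by (rule CollectI, rule exI[of _ "\<lambda>i. of_bool (i = k)"]) (use assms in \<open>auto simp: Int_insert_right\<close>)

lemma cone_rows_mult_subset:
  assumes "nonneg_mat A" "A \<in> carrier_mat m (dim_row Q)"
  shows "cone_rows (A * Q) \<subseteq> cone_rows Q"
proof
  fix v assume "v \<in> cone_rows (A * Q)"
  then obtain c where c: "\<forall>i<m. 0 \<le> c i"
    and v: "v = vec (dim_col Q) (\<lambda>j. \<Sum>i<m. c i * (A * Q) $$ (i,j))"
    using assms(2) unfolding cone_rows_def by auto
  define d where "d l = (\<Sum>i<m. c i * A $$ (i,l))" for l
  have "(\<Sum>i<m. c i * (A * Q) $$ (i,j)) = (\<Sum>l<dim_row Q. d l * Q $$ (l,j))" if "j < dim_col Q" for j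
  proof -
    have "(\<Sum>i<m. c i * (A * Q) $$ (i,j)) = (\<Sum>i<m. \<Sum>l<dim_row Q. c i * A $$ (i,l) * Q $$ (l,j))"
      using assms(2) that
      by (simp add: index_mult_mat_sum[of _ m "dim_row Q" _ "dim_col Q"] sum_distrib_left mult.assoc
          del: index_mult_mat)
    also have "\<dots> = (\<Sum>l<dim_row Q. \<Sum>i<m. c i * A $$ (i,l) * Q $$ (l,j))"
      by (rule sum.swap)
    also have "\<dots> = (\<Sum>l<dim_row Q. d l * Q $$ (l,j))"
      by (simp add: d_def sum_distrib_right)
    finally show ?thesis .
  qed
  then have "v = vec (dim_col Q) (\<lambda>j. \<Sum>l<dim_row Q. d l * Q $$ (l,j))"
    using v by auto
  moreover have "0 \<le> d l" if "l < dim_row Q" for l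
    using assms c that unfolding d_def nonneg_mat_def by (auto intro!: sum_nonneg)
  ultimately show "v \<in> cone_rows Q" unfolding cone_rows_def by auto
qed

lemma cone_rows_subset_factor:
  assumes "cone_rows Q2 \<subseteq> cone_rows Q1" and Q1: "Q1 \<in> carrier_mat n N" and Q2: "Q2 \<in> carrier_mat m N"
  obtains A where "A \<in> carrier_mat m n" "nonneg_mat A" "Q2 = A * Q1"
proof -
  have "\<forall>k\<in>{..<m}. \<exists>c. (\<forall>j<n. 0 \<le> c j) \<and> row Q2 k = vec N (\<lambda>i. \<Sum>j<n. c j * Q1 $$ (j,i))"
  proof
    fix k assume "k \<in> {..<m}"
    then have "row Q2 k \<in> cone_rows Q1" using row_in_cone_rows assms(1) Q2 by auto
    then show "\<exists>c. (\<forall>j<n. 0 \<le> c j) \<and> row Q2 k = vec N (\<lambda>i. \<Sum>j<n. c j * Q1 $$ (j,i))"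
      using Q1 unfolding cone_rows_def by auto
  qed
  from bchoice[OF this] obtain a where
    a: "\<And>k. k < m \<Longrightarrow> (\<forall>j<n. 0 \<le> a k j) \<and> row Q2 k = vec N (\<lambda>i. \<Sum>j<n. a k j * Q1 $$ (j,i))"
    by auto
  define A where "A = mat m n (\<lambda>(k,j). a k j)"
  have "A \<in> carrier_mat m n" by (simp add: A_def)
  moreover have "nonneg_mat A" using a unfolding nonneg_mat_def A_def by auto
  moreover have "Q2 = A * Q1"
  proof (rule eq_matI)
    fix k i assume "k < dim_row (A * Q1)" "i < dim_col (A * Q1)"
    then have k: "k < m" and i: "i < N" using Q1 by (auto simp: A_def)
    have "Q2 $$ (k,i) = row Q2 k $ i" using k i Q2 by simp
    also have "\<dots> = (\<Sum>j<n. a k j * Q1 $$ (j,i))" using a[OF k] i by simp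
    also have "\<dots> = (A * Q1) $$ (k,i)"
      using k i Q1 by (simp add: index_mult_mat_sum[of _ m n _ N] A_def del: index_mult_mat)
    finally show "Q2 $$ (k,i) = (A * Q1) $$ (k,i)" .
  qed (use Q1 Q2 in \<open>auto simp: A_def\<close>)
  ultimately show ?thesis using that by blast
qed

lemma perm_equiv_cone_rows_subset:
  assumes "perm_equiv (F1,Q1) (F2,Q2)"
    and "F1 \<in> carrier_mat M K1" "Q1 \<in> carrier_mat K1 N" "F2 \<in> carrier_mat M K2" "Q2 \<in> carrier_mat K2 N"
  shows "cone_rows Q2 \<subseteq> cone_rows Q1"
proof -
  obtain \<pi> where Q2: "Q2 = perm_mat K1 \<pi> * Q1"
    using assms perm_equiv_iff by blast
  have "cone_rows (perm_mat K1 \<pi> * Q1) \<subseteq> cone_rows Q1"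
    by (rule cone_rows_mult_subset[where m = K1]) (use assms(3) in \<open>simp_all add: nonneg_mat_def perm_mat_def\<close>)
  then show ?thesis using Q2 by simp
qed

lemma nonneg_inverse_row_support:
  assumes A: "A \<in> carrier_mat m n" and B: "B \<in> carrier_mat n m"
    and "nonneg_mat A" "nonneg_mat B" and AB: "A * B = 1\<^sub>m m" and BA: "B * A = 1\<^sub>m n"
    and i: "i < m"
  obtains j where "j < n" "0 < B $$ (j,i)" "\<forall>j'<n. A $$ (i,j') \<noteq> 0 \<longleftrightarrow> j' = j"
proof -
  have A0: "0 \<le> A $$ (i',j')" if "i' < m" "j' < n" for i' j'
    using assms(3) A that unfolding nonneg_mat_def by auto
  have B0: "0 \<le> B $$ (j',i')" if "i' < m" "j' < n" for i' j'
    using assms(4) B that unfolding nonneg_mat_def by auto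
  have "(\<Sum>j<n. A $$ (i,j) * B $$ (j,i)) = 1"
    using arg_cong[OF AB, of "\<lambda>X. X $$ (i,i)"] A B i by (simp add: index_mult_mat_sum del: index_mult_mat)
  then obtain j where j: "j < n" "A $$ (i,j) * B $$ (j,i) \<noteq> 0"
    using sum.not_neutral_contains_not_neutral[of "\<lambda>j. A $$ (i,j) * B $$ (j,i)" "{..<n}"] by auto
  then have Aij: "0 < A $$ (i,j)" and Bji: "0 < B $$ (j,i)"
    using A0 B0 i by (auto simp: less_le)
  have "A $$ (i,j') = 0" if j': "j' < n" "j' \<noteq> j" for j'
  proof -
    have "(\<Sum>l<m. B $$ (j,l) * A $$ (l,j')) = 0"
      using arg_cong[OF BA, of "\<lambda>X. X $$ (j,j')"] A B j j' by (simp add: index_mult_mat_sum del: index_mult_mat)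
    moreover have "\<forall>l\<in>{..<m}. 0 \<le> B $$ (j,l) * A $$ (l,j')" using A0 B0 j j' by auto
    ultimately have "B $$ (j,i) * A $$ (i,j') = 0"
      using sum_nonneg_eq_0_iff[of "{..<m}" "\<lambda>l. B $$ (j,l) * A $$ (l,j')"] i by auto
    then show ?thesis using Bji by simp
  qed
  then have "\<forall>j'<n. A $$ (i,j') \<noteq> 0 \<longleftrightarrow> j' = j" using Aij by fastforce
  then show ?thesis using that j(1) Bji by blast
qed

lemma nonneg_inverse_monomial:
  assumes A: "A \<in> carrier_mat m n" and B: "B \<in> carrier_mat n m"
    and "nonneg_mat A" "nonneg_mat B" and "A * B = 1\<^sub>m m" and "B * A = 1\<^sub>m n"
  obtains \<pi> where "m = n" "\<pi> permutes {..<m}" "\<forall>i<m. \<forall>j<m. A $$ (i,j) \<noteq> 0 \<longleftrightarrow> j = \<pi> i"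
proof -
  \<comment> \<open>the identity outside \<open>{..<m}\<close>, so that \<open>\<sigma>\<close> can be a permutation\<close>
  define \<sigma> where "\<sigma> i = (if i < m then SOME j. j < n \<and> 0 < B $$ (j,i) \<and>
      (\<forall>j'<n. A $$ (i,j') \<noteq> 0 \<longleftrightarrow> j' = j) else i)" for i
  define \<tau> where
    "\<tau> j = (SOME i. i < m \<and> 0 < A $$ (i,j) \<and> (\<forall>i'<m. B $$ (j,i') \<noteq> 0 \<longleftrightarrow> i' = i))" for j
  have \<sigma>: "\<sigma> i < n \<and> 0 < B $$ (\<sigma> i,i) \<and> (\<forall>j'<n. A $$ (i,j') \<noteq> 0 \<longleftrightarrow> j' = \<sigma> i)"
    if "i < m" for i
  proof -
    have "\<exists>j. j < n \<and> 0 < B $$ (j,i) \<and> (\<forall>j'<n. A $$ (i,j') \<noteq> 0 \<longleftrightarrow> j' = j)"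
      using nonneg_inverse_row_support[OF assms that] by blast
    from someI_ex[OF this] show ?thesis unfolding \<sigma>_def if_P[OF that] .
  qed
  have \<tau>: "\<tau> j < m \<and> 0 < A $$ (\<tau> j,j) \<and> (\<forall>i'<m. B $$ (j,i') \<noteq> 0 \<longleftrightarrow> i' = \<tau> j)"
    if "j < n" for j
  proof -
    have "\<exists>i. i < m \<and> 0 < A $$ (i,j) \<and> (\<forall>i'<m. B $$ (j,i') \<noteq> 0 \<longleftrightarrow> i' = i)"
      using nonneg_inverse_row_support[OF B A assms(4,3,6,5) that] by blast
    from someI_ex[OF this] show ?thesis unfolding \<tau>_def .
  qed
  have "bij_betw \<sigma> {..<m} {..<n}"
  proof (rule bij_betw_byWitness[where f' = \<tau>])
    show "\<forall>i\<in>{..<m}. \<tau> (\<sigma> i) = i"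
    proof
      fix i assume "i \<in> {..<m}"
      then show "\<tau> (\<sigma> i) = i" using \<sigma>[of i] \<tau>[of "\<sigma> i"] by force
    qed
    show "\<forall>j\<in>{..<n}. \<sigma> (\<tau> j) = j"
    proof
      fix j assume "j \<in> {..<n}"
      then show "\<sigma> (\<tau> j) = j" using \<tau>[of j] \<sigma>[of "\<tau> j"] by force
    qed
  qed (use \<sigma> \<tau> in auto)
  moreover from this have "m = n" using bij_betw_same_card by fastforce
  moreover have "\<sigma> permutes {..<m}"
    using calculation by (intro bij_imp_permutes) (auto simp: \<sigma>_def)
  ultimately show ?thesis using that \<sigma> by blast
qed

lemma monomial_col_sums_eq_perm_mat:
  assumes A: "A \<in> carrier_mat n n" and \<pi>: "\<pi> permutes {..<n}"
    and supp: "\<forall>i<n. \<forall>j<n. A $$ (i,j) \<noteq> 0 \<longleftrightarrow> j = \<pi> i"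
    and col_sum: "\<forall>j<n. (\<Sum>i<n. A $$ (i,j)) = 1"
  shows "A = perm_mat n \<pi>"
proof (rule eq_matI)
  fix i j assume "i < dim_row (perm_mat n \<pi>)" "j < dim_col (perm_mat n \<pi>)"
  then have i: "i < n" and j: "j < n" by (auto simp: perm_mat_def)
  show "A $$ (i,j) = perm_mat n \<pi> $$ (i,j)"
  proof (cases "j = \<pi> i")
    case True
    have "A $$ (l,j) = 0" if "l < n" "l \<noteq> i" for l
      using supp that i j True permutes_inj[OF \<pi>] by (metis injD)
    then have "(\<Sum>l<n. A $$ (l,j)) = (\<Sum>l<n. if l = i then A $$ (i,j) else 0)"
      by (intro sum.cong) auto
    also have "\<dots> = A $$ (i,j)" using i by simp
    finally have "(\<Sum>l<n. A $$ (l,j)) = A $$ (i,j)" .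
    then show ?thesis using col_sum i j True by (simp add: perm_mat_def)
  next
    case False
    then have "A $$ (i,j) = 0" using supp i j by blast
    then show ?thesis using False i j by (simp add: perm_mat_def)
  qed
qed (use A in \<open>auto simp: perm_mat_def\<close>)

lemma Qset_ones_mult:
  assumes "Q \<in> Qset K N"
  shows "mat 1 K (\<lambda>_. 1) * Q = mat 1 N (\<lambda>_. 1)"
proof (rule eq_matI)
  fix r i assume "r < dim_row (mat 1 N (\<lambda>_. 1))" "i < dim_col (mat 1 N (\<lambda>_. 1))"
  then show "(mat 1 K (\<lambda>_. 1) * Q) $$ (r,i) = mat 1 N (\<lambda>_. 1) $$ (r,i)"
    using assms unfolding Qset_def by (simp add: index_mult_mat_sum[of _ 1 K _ N] del: index_mult_mat)
qed (use assms in \<open>auto simp: Qset_def\<close>)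

lemma Qset_factor_col_sum:
  assumes Q1: "Q1 \<in> Qset n N" and Q2: "Q2 \<in> Qset m N" and A: "A \<in> carrier_mat m n"
    and "Q2 = A * Q1" "rows_lin_indep Q1" "j < n"
  shows "(\<Sum>i<m. A $$ (i,j)) = 1"
proof -
  have Q1c: "Q1 \<in> carrier_mat n N" using Q1 by (simp add: Qset_def)
  have "(mat 1 m (\<lambda>_. 1) * A) * Q1 = mat 1 m (\<lambda>_. 1) * Q2"
    using assoc_mult_mat[of "mat 1 m (\<lambda>_. 1)" 1 m A n Q1 N] A Q1c assms(4) by simp
  also have "\<dots> = mat 1 n (\<lambda>_. 1) * Q1" using Qset_ones_mult Q1 Q2 by simp
  finally have "mat 1 m (\<lambda>_. 1) * A = mat 1 n (\<lambda>_. 1)"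
    by (rule rows_lin_indep_mult_cancel[OF assms(5), rotated 2]) (use A Q1c in auto)
  then have "(mat 1 m (\<lambda>_. 1) * A) $$ (0,j) = 1" using assms(6) by simp
  then show ?thesis
    using A assms(6) by (simp add: index_mult_mat_sum[of _ 1 m _ n] del: index_mult_mat)
qed

lemma perm_equiv_if_cone_rows_eq:
  assumes F1: "F1 \<in> carrier_mat M K1" and Q1: "Q1 \<in> Qset K1 N"
    and F2: "F2 \<in> carrier_mat M K2" and Q2: "Q2 \<in> Qset K2 N"
    and indep1: "rows_lin_indep Q1" and indep2: "rows_lin_indep Q2"
    and cone: "cone_rows Q1 = cone_rows Q2" and FQ: "F1 * Q1 = F2 * Q2"
  shows "perm_equiv (F1,Q1) (F2,Q2)"
proof -
  have Q1c: "Q1 \<in> carrier_mat K1 N" and Q2c: "Q2 \<in> carrier_mat K2 N"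
    using Q1 Q2 by (auto simp: Qset_def)
  obtain A where A: "A \<in> carrier_mat K2 K1" "nonneg_mat A" and Q2A: "Q2 = A * Q1"
    using cone_rows_subset_factor[of Q2 Q1] cone Q1c Q2c by blast
  obtain B where B: "B \<in> carrier_mat K1 K2" "nonneg_mat B" and Q1B: "Q1 = B * Q2"
    using cone_rows_subset_factor[of Q1 Q2] cone Q1c Q2c by blast
  have AB: "A * B = 1\<^sub>m K2" using mutual_factors_mult_eq_one[OF indep2 A(1) B(1) Q2c Q2A Q1B] .
  have BA: "B * A = 1\<^sub>m K1" using mutual_factors_mult_eq_one[OF indep1 B(1) A(1) Q1c Q1B Q2A] .
  obtain \<pi> where K: "K2 = K1" and \<pi>: "\<pi> permutes {..<K1}"
    and supp: "\<forall>i<K1. \<forall>j<K1. A $$ (i,j) \<noteq> 0 \<longleftrightarrow> j = \<pi> i"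
    using nonneg_inverse_monomial[OF A(1) B(1) A(2) B(2) AB BA] by metis
  have "A = perm_mat K1 \<pi>"
    using monomial_col_sums_eq_perm_mat[OF _ \<pi> supp] Qset_factor_col_sum[OF Q1 Q2 A(1) Q2A indep1] A(1) K
    by simp
  then have Q2P: "Q2 = perm_mat K1 \<pi> * Q1" using Q2A by simp
  have "permute_cols F1 \<pi> * Q2 = permute_cols F1 \<pi> * (perm_mat K1 \<pi> * Q1)"
    using Q2P by simp
  also have "\<dots> = (permute_cols F1 \<pi> * perm_mat K1 \<pi>) * Q1"
    by (rule assoc_mult_mat[symmetric])
      (use F1 Q1c in \<open>auto simp: permute_cols_def perm_mat_def\<close>)
  also have "\<dots> = F2 * Q2" using permute_cols_mult_perm_mat[OF \<pi> F1] FQ by simp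
  finally have "permute_cols F1 \<pi> = F2"
    by (rule rows_lin_indep_mult_cancel[OF indep2, rotated 2]) (use F1 F2 Q2c K in \<open>auto simp: permute_cols_def\<close>)
  then show ?thesis using perm_equiv_iff[OF F1 Q1c F2 Q2c] K \<pi> Q2P by auto
qed

definition anchored_mat :: "nat \<Rightarrow> nat \<Rightarrow> (nat \<Rightarrow> real) \<Rightarrow> real mat" where
  "anchored_mat M K r = mat M K (\<lambda>(s,k). if s < K then of_bool (s = k) else r k)"

lemma anchored_mat_Fan:
  assumes "K \<le> M" "\<forall>k<K. 0 \<le> r k \<and> r k \<le> 1"
  shows "anchored_mat M K r \<in> Fan M K"
proof -
  have "anchored_mat M K r \<in> Fset M K"
    using assms(2) unfolding Fset_def anchored_mat_def by auto
  moreover have "\<exists>s<M. anchored_mat M K r $$ (s,k) > 0 \<and>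
      (\<forall>l<K. l \<noteq> k \<longrightarrow> anchored_mat M K r $$ (s,l) = 0)" if "k < K" for k
    using assms(1) that by (intro exI[of _ k]) (auto simp: anchored_mat_def)
  ultimately show ?thesis unfolding Fan_def by blast
qed

lemma anchored_mat_mult_eq:
  assumes Q: "Q \<in> carrier_mat K N"
    and "\<forall>i<N. (\<Sum>k<K. r k * Q $$ (k,i)) = (\<Sum>k<K. r' k * Q $$ (k,i))"
  shows "anchored_mat M K r * Q = anchored_mat M K r' * Q"
proof (rule eq_matI)
  fix s i assume "s < dim_row (anchored_mat M K r' * Q)" "i < dim_col (anchored_mat M K r' * Q)"
  then have s: "s < M" and i: "i < N" using Q by (auto simp: anchored_mat_def)
  have "(anchored_mat M K r * Q) $$ (s,i) = (\<Sum>k<K. anchored_mat M K r $$ (s,k) * Q $$ (k,i))" for r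
    using s i Q by (intro index_mult_mat_sum) (auto simp: anchored_mat_def)
  moreover have "(\<Sum>k<K. anchored_mat M K r $$ (s,k) * Q $$ (k,i)) =
      (if s < K then Q $$ (s,i) else \<Sum>k<K. r k * Q $$ (k,i))" for r
    using s by (auto simp: anchored_mat_def Int_insert_right intro: sum.cong)
  ultimately show "(anchored_mat M K r * Q) $$ (s,i) = (anchored_mat M K r' * Q) $$ (s,i)"
    using assms(2) i by simp
qed (simp_all add: anchored_mat_def)

lemma not_rows_lin_indep_bounded_coeffs:
  assumes "\<not> rows_lin_indep Q"
  obtains c k0 where "k0 < dim_row Q" "c k0 \<noteq> 0" "\<forall>k<dim_row Q. \<bar>c k\<bar> \<le> 1/2"
    "\<forall>j<dim_col Q. (\<Sum>k<dim_row Q. c k * Q $$ (k,j)) = 0"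
proof -
  obtain d k0 where d: "\<forall>j<dim_col Q. (\<Sum>k<dim_row Q. d k * Q $$ (k,j)) = 0"
    and k0: "k0 < dim_row Q" "d k0 \<noteq> 0"
    using assms unfolding rows_lin_indep_def by blast
  define S where "S = (\<Sum>k<dim_row Q. \<bar>d k\<bar>)"
  have d_le: "\<bar>d k\<bar> \<le> S" if "k < dim_row Q" for k
    unfolding S_def using that by (intro member_le_sum) auto
  have "0 < \<bar>d k0\<bar>" using k0(2) by simp
  with d_le[OF k0(1)] have "0 < S" by linarith
  define c where "c k = d k / (2 * S)" for k
  have "c k0 \<noteq> 0" using k0 \<open>0 < S\<close> by (simp add: c_def)
  moreover have "\<bar>c k\<bar> \<le> 1/2" if "k < dim_row Q" for k
    using d_le[OF that] \<open>0 < S\<close> by (simp add: c_def abs_divide field_simps)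
  moreover have "(\<Sum>k<dim_row Q. c k * Q $$ (k,j)) = 0" if "j < dim_col Q" for j
  proof -
    have "(\<Sum>k<dim_row Q. c k * Q $$ (k,j)) = (\<Sum>k<dim_row Q. d k * Q $$ (k,j)) / (2 * S)"
      by (simp add: c_def sum_divide_distrib)
    then show ?thesis using d that by simp
  qed
  ultimately show ?thesis using that k0 by blast
qed

lemma identifiable_imp_rows_lin_indep:
  assumes "identifiable \<M>" and Q: "Q \<in> carrier_mat K N" and "K < M"
    and Fan_closed: "\<forall>F\<in>Fan M K. (F,Q) \<in> \<M>"
  shows "rows_lin_indep Q"
proof (rule ccontr)
  assume "\<not> rows_lin_indep Q"
  then obtain c k0 where k0: "k0 < K" "c k0 \<noteq> 0" and c_le: "\<forall>k<K. \<bar>c k\<bar> \<le> 1/2"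
    and c: "\<forall>i<N. (\<Sum>k<K. c k * Q $$ (k,i)) = 0"
    by (rule not_rows_lin_indep_bounded_coeffs) (use Q in auto)
  define G0 where "G0 = anchored_mat M K (\<lambda>_. 1/2)"
  define G where "G = anchored_mat M K (\<lambda>k. 1/2 + c k)"
  have G0c: "G0 \<in> carrier_mat M K" and Gc: "G \<in> carrier_mat M K"
    by (simp_all add: G0_def G_def anchored_mat_def)
  have "G0 \<in> Fan M K"
    unfolding G0_def using \<open>K < M\<close> by (intro anchored_mat_Fan) auto
  moreover have "G \<in> Fan M K"
    unfolding G_def using \<open>K < M\<close> c_le by (intro anchored_mat_Fan) (auto simp: abs_le_iff)
  moreover have "G0 * Q = G * Q"
    unfolding G0_def G_def using c Q by (intro anchored_mat_mult_eq) (auto simp: distrib_right sum.distrib)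
  ultimately have "perm_equiv (G0,Q) (G,Q)"
    using assms(1) Fan_closed unfolding identifiable_def by blast
  then obtain \<pi> where \<pi>: "\<pi> permutes {..<K}" and "G = permute_cols G0 \<pi>"
    using perm_equiv_iff[OF G0c Q Gc Q] by blast
  then have "G $$ (K,k0) = G0 $$ (K, \<pi> k0)"
    using G0c \<open>K < M\<close> k0 by (simp add: permute_cols_def)
  moreover have "\<pi> k0 < K" using permutes_in_image[OF \<pi>, of k0] k0 by simp
  ultimately show False
    using \<open>K < M\<close> k0 by (simp add: G_def G0_def anchored_mat_def)
qed

lemma identifiable_imp_cone_rows_eq:
  assumes shape: "\<forall>(F,Q)\<in>\<M>. \<exists>K. F \<in> carrier_mat M K \<and> Q \<in> carrier_mat K N"
    and idf: "identifiable \<M>" and mem: "(F1,Q1) \<in> \<M>" "(F2,Q2) \<in> \<M>" and FQ: "F1 * Q1 = F2 * Q2"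
  shows "cone_rows Q1 = cone_rows Q2"
proof -
  obtain K1 K2 where F1: "F1 \<in> carrier_mat M K1" and Q1: "Q1 \<in> carrier_mat K1 N"
    and F2: "F2 \<in> carrier_mat M K2" and Q2: "Q2 \<in> carrier_mat K2 N"
    using shape mem unfolding Ball_def by blast
  have "perm_equiv (F1,Q1) (F2,Q2)" using idf mem FQ unfolding identifiable_def by blast
  moreover have "perm_equiv (F2,Q2) (F1,Q1)" using idf mem FQ[symmetric] unfolding identifiable_def by blast
  ultimately show ?thesis
    using perm_equiv_cone_rows_subset[OF _ F1 Q1 F2 Q2] perm_equiv_cone_rows_subset[OF _ F2 Q2 F1 Q1]
    by (intro equalityI) simp_all
qed

lemma identifiable_if_cone_rows_eq:
  assumes shape: "\<forall>(F,Q)\<in>\<M>. \<exists>K. F \<in> carrier_mat M K \<and> Q \<in> Qset K N"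
    and cone: "\<forall>F1 Q1 F2 Q2. (F1,Q1) \<in> \<M> \<longrightarrow> (F2,Q2) \<in> \<M> \<longrightarrow>
      F1 * Q1 = F2 * Q2 \<longrightarrow> cone_rows Q1 = cone_rows Q2"
    and indep: "\<forall>(F,Q)\<in>\<M>. rows_lin_indep Q"
  shows "identifiable \<M>"
  unfolding identifiable_def
proof (intro allI impI)
  fix F1 Q1 F2 Q2 assume mem: "(F1,Q1) \<in> \<M>" "(F2,Q2) \<in> \<M>" and FQ: "F1 * Q1 = F2 * Q2"
  obtain K1 K2 where "F1 \<in> carrier_mat M K1" "Q1 \<in> Qset K1 N" "F2 \<in> carrier_mat M K2" "Q2 \<in> Qset K2 N"
    using shape mem unfolding Ball_def by blast
  then show "perm_equiv (F1,Q1) (F2,Q2)"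
  proof (rule perm_equiv_if_cone_rows_eq)
    show "rows_lin_indep Q1" "rows_lin_indep Q2" using indep mem by auto
    show "cone_rows Q1 = cone_rows Q2" using cone mem FQ by blast
  qed (rule FQ)
qed

theorem mainTheorem6:
  fixes M N :: nat and \<M> :: "(real mat \<times> real mat) set"
  assumes "0 < M" and "0 < N"
    and "\<M> \<subseteq> {(F,Q). \<exists>K\<ge>1. F \<in> Fset M K \<and> Q \<in> Qset K N}"
    and "\<forall>(F,Q)\<in>\<M>. dim_col F < M"
    and "\<forall>(F,Q)\<in>\<M>. \<forall>F'\<in>Fan M (dim_col F). (F',Q) \<in> \<M>"
  shows "identifiable \<M> \<longleftrightarrow>
     ((\<forall>F1 Q1 F2 Q2. (F1,Q1) \<in> \<M> \<longrightarrow> (F2,Q2) \<in> \<M> \<longrightarrow>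
         F1 * Q1 = F2 * Q2 \<longrightarrow> cone_rows Q1 = cone_rows Q2) \<and>
      (\<forall>(F,Q)\<in>\<M>. rows_lin_indep Q))"
proof -
  have shape: "\<forall>(F,Q)\<in>\<M>. \<exists>K. F \<in> carrier_mat M K \<and> Q \<in> Qset K N"
    using assms(3) unfolding Fset_def by blast
  then have carriers: "\<forall>(F,Q)\<in>\<M>. \<exists>K. F \<in> carrier_mat M K \<and> Q \<in> carrier_mat K N"
    unfolding Qset_def by blast
  have indep: "rows_lin_indep Q" if idf: "identifiable \<M>" and mem: "(F,Q) \<in> \<M>" for F Q
  proof -
    obtain K where F: "F \<in> carrier_mat M K" and Q: "Q \<in> carrier_mat K N"
      using carriers mem unfolding Ball_def by blast
    show ?thesis
    proof (rule identifiable_imp_rows_lin_indep[OF idf Q])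
      show "K < M" using assms(4) mem F by fastforce
      show "\<forall>F'\<in>Fan M K. (F',Q) \<in> \<M>" using assms(5) mem F by fastforce
    qed
  qed
  show ?thesis
  proof (intro iffI conjI allI impI ballI)
    fix F1 Q1 F2 Q2 assume "identifiable \<M>" "(F1,Q1) \<in> \<M>" "(F2,Q2) \<in> \<M>" "F1 * Q1 = F2 * Q2"
    then show "cone_rows Q1 = cone_rows Q2" by (rule identifiable_imp_cone_rows_eq[OF carriers])
  next
    fix p assume "identifiable \<M>" "p \<in> \<M>"
    then show "case p of (F,Q) \<Rightarrow> rows_lin_indep Q" using indep by (cases p) simp
  qed (use identifiable_if_cone_rows_eq[OF shape] in blast)
qed

end
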